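(* Let $f:\mathbb{R}^n\to\mathbb{R}$ be differentiable and $c:\mathbb{R}^n\to\mathbb{R}^m$ differentiable with Jacobian $J(\cdot)$, and let $x\in\mathbb{R}^n$, $L,\Gamma>0$ be such that for all $s$ on the segment $\{\alpha\bar d:\alpha\in[0,1]\}$, $f(x+s)\le f(x)+\nabla f(x)^Ts+\tfrac L2\|s\|_2^2$ and $\|c(x+s)-c(x)-J(x)s\|_1\le\tfrac\Gamma2\|s\|_2^2$. Write $g=\nabla f(x)$, $c=c(x)$, $J=J(x)$, and let $\phi(z,\tau):=\tau f(z)+\|c(z)\|_1$. Let $d,\tilde d,\bar d,\bar g\in\mathbb{R}^n$ with $c+Jd=0$ and $c+J\tilde d=0$, let $\tau,\bar\tau>0$, $\eta\in(0,1)$, $\beta\in(0,1]$, $\sigma\in[2,4]$, and let $\bar\alpha\in(0,1]$ satisfy $\bar\alpha\le\dfrac{2(1-\eta)\beta^{\sigma/2-1}\Delta l(\bar\tau,\bar g,\bar d)}{(\bar\tau L+\Gamma)\|\bar d\|_2^2}$ (with $\bar d\neq0$). Then $$\phi(x+\bar\alpha\bar d,\bar\tau)-\phi(x,\bar\tau)\le-\bar\alpha\Delta l(\tau,g,d)+(1-\eta)\bar\alpha\beta^{\sigma/2-1}\Delta l(\bar\tau,\bar g,\bar d)+\bar\alpha\bar\tau g^T(\bar d-d)+\bar\alpha(\bar\tau-\tau)g^Td+\bar\alpha\|J(\bar d-\tilde d)\|_1.$$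
   Context: $\Delta l(\tau,g,d):=-\tau g^Td+\|c\|_1-\|c+Jd\|_1$ with $c=c(x)$, $J=J(x)$. *)

theory Defs
  imports "HOL-Analysis.Analysis"
begin

definition l1norm :: "real ^ 'm \<Rightarrow> real" where
  "l1norm v = (\<Sum>i\<in>UNIV. \<bar>v $ i\<bar>)"

definition delta_l :: "real ^ 'm \<Rightarrow> real ^ 'n ^ 'm \<Rightarrow> real \<Rightarrow> real ^ 'n \<Rightarrow> real ^ 'n \<Rightarrow> real" where
  "delta_l cx Jx tau g d = - tau * (g \<bullet> d) + l1norm cx - l1norm (cx + Jx *v d)"

definition merit :: "(real ^ 'n \<Rightarrow> real) \<Rightarrow> (real ^ 'n \<Rightarrow> real ^ 'm) \<Rightarrow> real ^ 'n \<Rightarrow> real \<Rightarrow> real" where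
  "merit f c z tau = tau * f z + l1norm (c z)"

end

theory Submission
  imports Defs
begin

text \<open>Along the step \<open>s = \<alpha>b db\<close> the two quadratic upper models bound the change of the merit
  function by \<open>\<tau>b g\<^sup>T s + \<parallel>c + J s\<parallel>\<^sub>1 - \<parallel>c\<parallel>\<^sub>1 + (\<tau>b L + \<Gamma>)/2 \<parallel>s\<parallel>\<^sup>2\<close>. Since \<open>dt\<close> solves the
  linearized constraint, \<open>c + J s = (1 - \<alpha>b) c + \<alpha>b J (db - dt)\<close>, so convexity of the 1-norm
  bounds the middle term by \<open>-\<alpha>b \<parallel>c\<parallel>\<^sub>1 + \<alpha>b \<parallel>J (db - dt)\<parallel>\<^sub>1\<close>; the step-size condition makes
  the quadratic term at most \<open>(1 - \<eta>) \<alpha>b \<beta>\<^bsup>\<sigma>/2-1\<^esup> \<Delta>l(\<tau>b, gb, db)\<close>. Because \<open>d\<close> is feasible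
  too, \<open>\<Delta>l(\<tau>, g, d) = -\<tau> g\<^sup>T d + \<parallel>c\<parallel>\<^sub>1\<close>, and the claim is a rearrangement.\<close>

lemma l1norm_triangle: "l1norm (u + v) \<le> l1norm u + l1norm v"
  unfolding l1norm_def by (simp add: sum.distrib[symmetric] sum_mono abs_triangle_ineq)

lemma l1norm_scaleR: "l1norm (a *\<^sub>R u) = \<bar>a\<bar> * l1norm u"
  unfolding l1norm_def by (simp add: abs_mult sum_distrib_left)

lemma l1norm_zero [simp]: "l1norm 0 = 0"
  unfolding l1norm_def by simp

lemma delta_l_feasible:
  assumes "cx + Jx *v d = 0"
  shows "delta_l cx Jx \<tau> g d = - \<tau> * (g \<bullet> d) + l1norm cx"
  using assms by (simp add: delta_l_def)

lemma merit_diff_le_model: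
  fixes f :: "real ^ 'n \<Rightarrow> real" and c :: "real ^ 'n \<Rightarrow> real ^ 'm"
  assumes f_model: "f (x + s) \<le> f x + g \<bullet> s + L / 2 * (norm s)\<^sup>2"
    and c_model: "l1norm (c (x + s) - c x - J *v s) \<le> \<Gamma> / 2 * (norm s)\<^sup>2"
    and "\<tau> \<ge> 0"
  shows "merit f c (x + s) \<tau> - merit f c x \<tau>
    \<le> \<tau> * (g \<bullet> s) + l1norm (c x + J *v s) - l1norm (c x) + (\<tau> * L + \<Gamma>) / 2 * (norm s)\<^sup>2"
proof -
  have "l1norm (c (x + s)) \<le> l1norm (c x + J *v s) + l1norm (c (x + s) - c x - J *v s)"
    using l1norm_triangle[of "c x + J *v s" "c (x + s) - c x - J *v s"] by simp
  moreover have "\<tau> * f (x + s) \<le> \<tau> * (f x + g \<bullet> s + L / 2 * (norm s)\<^sup>2)"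
    using f_model \<open>\<tau> \<ge> 0\<close> by (rule mult_left_mono)
  ultimately show ?thesis
    using c_model by (simp add: merit_def field_simps)
qed

lemma l1norm_linearization_convex:
  assumes feasible: "cx + Jx *v dt = 0" and "0 \<le> a" "a \<le> 1"
  shows "l1norm (cx + Jx *v (a *\<^sub>R db)) \<le> (1 - a) * l1norm cx + a * l1norm (Jx *v (db - dt))"
proof -
  have "Jx *v (db - dt) = cx + Jx *v db"
    using feasible by (simp add: matrix_vector_mult_diff_distrib algebra_simps eq_neg_iff_add_eq_0)
  then have "cx + Jx *v (a *\<^sub>R db) = (1 - a) *\<^sub>R cx + a *\<^sub>R (Jx *v (db - dt))"
    using feasible by (simp add: matrix_vector_mult_scaleR algebra_simps flip: scaleR_add_right)
  then show ?thesis
    using l1norm_triangle[of "(1 - a) *\<^sub>R cx" "a *\<^sub>R (Jx *v (db - dt))"] assms(2,3)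
    by (simp add: l1norm_scaleR)
qed

lemma quadratic_le_linear_if_step_small:
  fixes a Q K :: real
  assumes "0 \<le> a" "Q > 0" "a \<le> 2 * K / Q"
  shows "Q / 2 * a\<^sup>2 \<le> a * K"
proof -
  have "a * Q \<le> 2 * K"
    using assms by (simp add: le_divide_eq)
  then have "a * (a * Q) \<le> a * (2 * K)"
    using \<open>0 \<le> a\<close> by (rule mult_left_mono)
  then show ?thesis
    by (simp add: power2_eq_square algebra_simps)
qed

theorem lemma4p8:
  fixes f :: "real ^ 'n \<Rightarrow> real" and c :: "real ^ 'n \<Rightarrow> real ^ 'm"
    and g :: "real ^ 'n" and J :: "real ^ 'n ^ 'm"
    and x d dt db gb :: "real ^ 'n"
    and L \<Gamma> \<tau> \<tau>b \<eta> \<beta> \<sigma> \<alpha>b :: real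
  assumes f_diff: "\<forall>z. f differentiable (at z)"
    and c_diff: "\<forall>z. c differentiable (at z)"
    and grad: "(f has_derivative (\<lambda>h. g \<bullet> h)) (at x)"
    and jac: "(c has_derivative (\<lambda>h. J *v h)) (at x)"
    and L_pos: "L > 0" and \<Gamma>_pos: "\<Gamma> > 0"
    and f_bound: "\<forall>\<alpha>\<in>{0..1}. let s = \<alpha> *\<^sub>R db in
        f (x + s) \<le> f x + g \<bullet> s + L / 2 * (norm s)\<^sup>2"
    and c_bound: "\<forall>\<alpha>\<in>{0..1}. let s = \<alpha> *\<^sub>R db in
        l1norm (c (x + s) - c x - J *v s) \<le> \<Gamma> / 2 * (norm s)\<^sup>2"
    and d_lin: "c x + J *v d = 0"
    and dt_lin: "c x + J *v dt = 0"
    and \<tau>_pos: "\<tau> > 0" and \<tau>b_pos: "\<tau>b > 0"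
    and \<eta>: "0 < \<eta>" "\<eta> < 1"
    and \<beta>: "0 < \<beta>" "\<beta> \<le> 1"
    and \<sigma>: "2 \<le> \<sigma>" "\<sigma> \<le> 4"
    and db_nz: "db \<noteq> 0"
    and \<alpha>b: "0 < \<alpha>b" "\<alpha>b \<le> 1"
    and \<alpha>b_bound: "\<alpha>b \<le> 2 * (1 - \<eta>) * \<beta> powr (\<sigma> / 2 - 1) * delta_l (c x) J \<tau>b gb db
                        / ((\<tau>b * L + \<Gamma>) * (norm db)\<^sup>2)"
  shows "merit f c (x + \<alpha>b *\<^sub>R db) \<tau>b - merit f c x \<tau>b
     \<le> - \<alpha>b * delta_l (c x) J \<tau> g d
       + (1 - \<eta>) * \<alpha>b * \<beta> powr (\<sigma> / 2 - 1) * delta_l (c x) J \<tau>b gb db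
       + \<alpha>b * \<tau>b * (g \<bullet> (db - d))
       + \<alpha>b * (\<tau>b - \<tau>) * (g \<bullet> d)
       + \<alpha>b * l1norm (J *v (db - dt))"
proof -
  define Q where "Q = (\<tau>b * L + \<Gamma>) * (norm db)\<^sup>2"
  define K where "K = (1 - \<eta>) * \<beta> powr (\<sigma> / 2 - 1) * delta_l (c x) J \<tau>b gb db"
  have "\<alpha>b \<in> {0..1}" using \<alpha>b by simp
  then have "merit f c (x + \<alpha>b *\<^sub>R db) \<tau>b - merit f c x \<tau>b
      \<le> \<tau>b * (g \<bullet> (\<alpha>b *\<^sub>R db)) + l1norm (c x + J *v (\<alpha>b *\<^sub>R db)) - l1norm (c x)
        + (\<tau>b * L + \<Gamma>) / 2 * (norm (\<alpha>b *\<^sub>R db))\<^sup>2"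
    using f_bound c_bound \<tau>b_pos by (intro merit_diff_le_model) (auto simp: Let_def)
  also have "(\<tau>b * L + \<Gamma>) / 2 * (norm (\<alpha>b *\<^sub>R db))\<^sup>2 = Q / 2 * \<alpha>b\<^sup>2"
    by (simp add: Q_def power_mult_distrib)
  also have "Q / 2 * \<alpha>b\<^sup>2 \<le> \<alpha>b * K"
  proof (rule quadratic_le_linear_if_step_small)
    show "Q > 0"
      using db_nz \<tau>b_pos L_pos \<Gamma>_pos by (simp add: Q_def add_pos_pos)
    show "\<alpha>b \<le> 2 * K / Q"
      using \<alpha>b_bound by (simp only: Q_def K_def mult.assoc)
  qed (use \<alpha>b in simp)
  also have "l1norm (c x + J *v (\<alpha>b *\<^sub>R db))
      \<le> (1 - \<alpha>b) * l1norm (c x) + \<alpha>b * l1norm (J *v (db - dt))"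
    using dt_lin \<alpha>b by (intro l1norm_linearization_convex) auto
  also have "\<tau>b * (g \<bullet> (\<alpha>b *\<^sub>R db)) + ((1 - \<alpha>b) * l1norm (c x) + \<alpha>b * l1norm (J *v (db - dt)))
      - l1norm (c x) + \<alpha>b * K
    = - \<alpha>b * delta_l (c x) J \<tau> g d
       + (1 - \<eta>) * \<alpha>b * \<beta> powr (\<sigma> / 2 - 1) * delta_l (c x) J \<tau>b gb db
       + \<alpha>b * \<tau>b * (g \<bullet> (db - d))
       + \<alpha>b * (\<tau>b - \<tau>) * (g \<bullet> d)
       + \<alpha>b * l1norm (J *v (db - dt))"
    by (simp add: delta_l_feasible[OF d_lin] K_def inner_diff_right algebra_simps)
  finally show ?thesis
    by simp
qed

end
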